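(* Let $X$ be a Polish space (complete separable metric space with metric $d$) and $f:X\to X$ a continuous map. If for some $\delta>0$ the map $f$ has an uncountable $\delta$-scrambled set, then $f$ has an expansive measure, i.e., there are a Borel probability measure $\mu$ on $X$ and $\epsilon>0$ such that $\mu(\Phi_\epsilon(x))=0$ for all $x\in X$.
   Context: Here $\Phi_\epsilon(x)=\{y\in X: d(f^i(y),f^i(x))\le\epsilon \text{ for all } i\in\mathbb{N}\}$, $\mathbb{N}=\{0,1,2,\dots\}$. For $\delta\ge0$, a $\delta$-scrambled set of $f$ is a subset $S\subset X$ such that for all distinct $x,y\in S$: $\liminf_{n\to\infty}d(f^n(x),f^n(y))=0$ and $\limsup_{n\to\infty}d(f^n(x),f^n(y))>\delta$. *)

theory Defs
  imports "HOL-Probability.Probability"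
begin

definition dyn_ball :: "('a::metric_space \<Rightarrow> 'a) \<Rightarrow> real \<Rightarrow> 'a \<Rightarrow> 'a set" where
  "dyn_ball f \<epsilon> x = {y. \<forall>i::nat. dist ((f ^^ i) y) ((f ^^ i) x) \<le> \<epsilon>}"

definition scrambled_set :: "('a::metric_space \<Rightarrow> 'a) \<Rightarrow> real \<Rightarrow> 'a set \<Rightarrow> bool" where
  "scrambled_set f \<delta> S \<longleftrightarrow>
     (\<forall>x\<in>S. \<forall>y\<in>S. x \<noteq> y \<longrightarrow>
        liminf (\<lambda>n. ereal (dist ((f ^^ n) x) ((f ^^ n) y))) = 0 \<and>
        limsup (\<lambda>n. ereal (dist ((f ^^ n) x) ((f ^^ n) y))) > ereal \<delta>)"

definition expansive_measure :: "('a::metric_space \<Rightarrow> 'a) \<Rightarrow> 'a measure \<Rightarrow> real \<Rightarrow> bool" where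
  "expansive_measure f M \<epsilon> \<longleftrightarrow>
     prob_space M \<and> sets M = sets borel \<and> \<epsilon> > 0 \<and> (\<forall>x. emeasure M (dyn_ball f \<epsilon> x) = 0)"

end

theory Submission
  imports Defs
begin

text \<open>Two distinct points of a scrambled set have orbits that become more than \<open>\<delta>\<close> apart at
  some time, and by continuity this persists on small neighbourhoods of the two points. As an
  uncountable subset of a second countable space has uncountably many condensation points,
  repeatedly splitting a ball that meets \<open>S\<close> uncountably yields a Cantor scheme of closed balls
  with halving radii whose siblings are everywhere \<open>\<delta>\<close>-separated. Following the binary digits
  of \<open>t \<in> [0,1)\<close> down this tree gives a Borel map \<open>h\<close>, and the image of Lebesgue measure under
  \<open>h\<close> is expansive with \<open>\<epsilon> = \<delta>/2\<close>: a dynamic ball \<open>\<Phi>\<^sub>\<delta>\<^sub>/\<^sub>2(x)\<close> contains no two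
  \<open>\<delta>\<close>-separated points, so its preimage under \<open>h\<close> has at most one point.\<close>

definition condensation_points :: "'a::topological_space set \<Rightarrow> 'a set" where
  "condensation_points A = {x. \<forall>U. open U \<longrightarrow> x \<in> U \<longrightarrow> uncountable (A \<inter> U)}"

lemma countable_diff_condensation_points:
  fixes A :: "'a::second_countable_topology set"
  shows "countable (A - condensation_points A)"
proof -
  obtain \<B> :: "'a set set" where \<B>: "countable \<B>" "\<And>B. B \<in> \<B> \<Longrightarrow> open B"
    "\<And>U. open U \<Longrightarrow> \<exists>\<U>. \<U> \<subseteq> \<B> \<and> U = \<Union>\<U>"
    using univ_second_countable by blast
  have "A - condensation_points A \<subseteq> (\<Union>B\<in>{B\<in>\<B>. countable (A \<inter> B)}. A \<inter> B)"
  proof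
    fix x assume "x \<in> A - condensation_points A"
    then obtain U where U: "x \<in> A" "open U" "x \<in> U" "countable (A \<inter> U)"
      by (auto simp: condensation_points_def)
    then obtain \<U> where "\<U> \<subseteq> \<B>" "U = \<Union>\<U>"
      using \<B>(3) by blast
    with U obtain B where "B \<in> \<B>" "x \<in> B" "B \<subseteq> U"
      by blast
    with U show "x \<in> (\<Union>B\<in>{B\<in>\<B>. countable (A \<inter> B)}. A \<inter> B)"
      by (blast intro: countable_subset[of "A \<inter> B" "A \<inter> U"])
  qed
  moreover have "countable (\<Union>B\<in>{B\<in>\<B>. countable (A \<inter> B)}. A \<inter> B)"
    using \<B>(1) by (intro countable_UN) auto
  ultimately show ?thesis
    using countable_subset by blast
qed

lemma uncountable_condensation_points:
  fixes A :: "'a::second_countable_topology set"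
  assumes "uncountable A"
  shows "uncountable (A \<inter> condensation_points A)"
proof
  assume "countable (A \<inter> condensation_points A)"
  then have "countable ((A \<inter> condensation_points A) \<union> (A - condensation_points A))"
    using countable_diff_condensation_points by blast
  then show False
    using assms by (metis Int_Diff_Un)
qed

lemma condensation_point_ball:
  "x \<in> condensation_points A \<Longrightarrow> 0 < e \<Longrightarrow> uncountable (A \<inter> ball x e)"
  by (simp add: condensation_points_def)

lemma continuous_on_funpow:
  fixes f :: "'a::topological_space \<Rightarrow> 'a"
  assumes "continuous_on UNIV f"
  shows "continuous_on UNIV (f ^^ n)"
proof (induction n)
  case (Suc n)
  then show ?case
    by (simp add: continuous_on_compose2[OF assms])
qed (simp add: continuous_on_id)

definition orbit_separated :: "('a::metric_space \<Rightarrow> 'a) \<Rightarrow> real \<Rightarrow> 'a \<Rightarrow> 'a \<Rightarrow> bool" where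
  "orbit_separated f \<delta> y z \<longleftrightarrow> (\<exists>n. \<delta> < dist ((f ^^ n) y) ((f ^^ n) z))"

lemma orbit_separated_commute: "orbit_separated f \<delta> y z \<longleftrightarrow> orbit_separated f \<delta> z y"
  by (simp add: orbit_separated_def dist_commute)

lemma scrambled_set_pairwise_orbit_separated:
  assumes "scrambled_set f \<delta> S"
  shows "pairwise (orbit_separated f \<delta>) S"
proof (rule pairwiseI, rule ccontr)
  fix y z assume "y \<in> S" "z \<in> S" "y \<noteq> z" "\<not> orbit_separated f \<delta> y z"
  then have "limsup (\<lambda>n. ereal (dist ((f ^^ n) y) ((f ^^ n) z))) \<le> ereal \<delta>"
    by (intro Limsup_bounded) (auto simp: orbit_separated_def not_less)
  with assms \<open>y \<in> S\<close> \<open>z \<in> S\<close> \<open>y \<noteq> z\<close> show False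
    unfolding scrambled_set_def by (meson leD)
qed

lemma orbit_separated_nhds:
  assumes "continuous_on UNIV f" "orbit_separated f \<delta> y z"
  obtains d where "0 < d" "\<And>y' z'. y' \<in> ball y d \<Longrightarrow> z' \<in> ball z d \<Longrightarrow> orbit_separated f \<delta> y' z'"
proof -
  obtain n where n: "\<delta> < dist ((f ^^ n) y) ((f ^^ n) z)"
    using assms(2) by (auto simp: orbit_separated_def)
  define \<eta> where "\<eta> = (dist ((f ^^ n) y) ((f ^^ n) z) - \<delta>) / 2"
  have "0 < \<eta>"
    using n by (simp add: \<eta>_def)
  have "continuous_on UNIV (f ^^ n)"
    using assms(1) by (rule continuous_on_funpow)
  then obtain dy dz where
    "0 < dy" and dy: "\<And>y'. dist y' y < dy \<Longrightarrow> dist ((f ^^ n) y') ((f ^^ n) y) < \<eta>"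
    and "0 < dz" and dz: "\<And>z'. dist z' z < dz \<Longrightarrow> dist ((f ^^ n) z') ((f ^^ n) z) < \<eta>"
    using \<open>0 < \<eta>\<close> unfolding continuous_on_iff by (metis UNIV_I)
  then show ?thesis
  proof (intro that[of "min dy dz"])
    fix y' z' assume "y' \<in> ball y (min dy dz)" "z' \<in> ball z (min dy dz)"
    then have "dist ((f ^^ n) y') ((f ^^ n) y) < \<eta>" "dist ((f ^^ n) z') ((f ^^ n) z) < \<eta>"
      using dy[of y'] dz[of z'] by (simp_all add: dist_commute)
    moreover have "dist ((f ^^ n) y) ((f ^^ n) z) \<le> dist ((f ^^ n) y') ((f ^^ n) y)
        + dist ((f ^^ n) y') ((f ^^ n) z') + dist ((f ^^ n) z') ((f ^^ n) z)"
      using dist_triangle3[of "(f ^^ n) y" "(f ^^ n) z" "(f ^^ n) y'"]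
        dist_triangle[of "(f ^^ n) y'" "(f ^^ n) z" "(f ^^ n) z'"] by linarith
    ultimately have "\<delta> < dist ((f ^^ n) y') ((f ^^ n) z')"
      using \<eta>_def by simp
    then show "orbit_separated f \<delta> y' z'"
      unfolding orbit_separated_def by blast
  qed simp
qed

lemma closed_dyn_ball:
  assumes "continuous_on UNIV f"
  shows "closed (dyn_ball f \<epsilon> x)"
proof -
  have "dyn_ball f \<epsilon> x = (\<Inter>i. {y. dist ((f ^^ i) y) ((f ^^ i) x) \<le> \<epsilon>})"
    unfolding dyn_ball_def by auto
  then show ?thesis
    by (auto intro!: closed_Collect_le continuous_on_dist continuous_on_funpow[OF assms])
qed

lemma not_orbit_separated_dyn_ball:
  assumes "y \<in> dyn_ball f \<epsilon> x" "z \<in> dyn_ball f \<epsilon> x"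
  shows "\<not> orbit_separated f (2 * \<epsilon>) y z"
proof
  assume "orbit_separated f (2 * \<epsilon>) y z"
  then obtain n where "2 * \<epsilon> < dist ((f ^^ n) y) ((f ^^ n) z)"
    by (auto simp: orbit_separated_def)
  moreover have "dist ((f ^^ n) y) ((f ^^ n) x) \<le> \<epsilon>" "dist ((f ^^ n) z) ((f ^^ n) x) \<le> \<epsilon>"
    using assms by (auto simp: dyn_ball_def)
  ultimately show False
    using dist_triangle2[of "(f ^^ n) y" "(f ^^ n) z" "(f ^^ n) x"] by linarith
qed

lemma two_condensation_points:
  fixes A :: "'a::second_countable_topology set"
  assumes "uncountable A"
  obtains x y where "x \<in> A" "y \<in> A" "x \<noteq> y" "x \<in> condensation_points A" "y \<in> condensation_points A"
proof -
  let ?C = "A \<inter> condensation_points A"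
  have "infinite ?C"
    using uncountable_condensation_points[OF assms] countable_finite by blast
  then obtain x where "x \<in> ?C"
    using infinite_imp_nonempty by blast
  moreover have "infinite (?C - {x})"
    using \<open>infinite ?C\<close> by simp
  then obtain y where "y \<in> ?C - {x}"
    using infinite_imp_nonempty by blast
  ultimately show thesis
    using that by blast
qed

lemma cball_subset_cball_of_dist:
  fixes p q :: "'a::metric_space"
  assumes "dist p q + \<rho> \<le> r"
  shows "cball q \<rho> \<subseteq> cball p r"
proof
  fix x assume "x \<in> cball q \<rho>"
  then show "x \<in> cball p r"
    using assms dist_triangle[of p x q] by simp
qed

lemma uncountable_Int_ball_imp_pos: "uncountable (S \<inter> ball p r) \<Longrightarrow> 0 < r"
  by (rule ccontr) (simp add: ball_empty)

lemma small_cballs_in_cball: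
  fixes p q1 q2 :: "'a::metric_space"
  assumes "q1 \<in> ball p r" "q2 \<in> ball p r" "0 < d"
  obtains \<rho> where "0 < \<rho>" "\<rho> < d" "2 * \<rho> \<le> r" "cball q1 \<rho> \<subseteq> cball p r" "cball q2 \<rho> \<subseteq> cball p r"
proof -
  define m where "m = max (dist p q1) (dist p q2)"
  define \<rho> where "\<rho> = min (d / 2) ((r - m) / 2)"
  have "m < r"
    using assms by (auto simp: m_def)
  then have "0 < \<rho>" "2 * \<rho> \<le> d" "2 * \<rho> \<le> r - m"
    using \<open>0 < d\<close> by (auto simp: \<rho>_def min_def)
  moreover have "dist p q1 \<le> m" "dist p q2 \<le> m" "0 \<le> m"
    by (simp_all add: m_def le_max_iff_disj)
  ultimately show thesis
    by (intro that[of \<rho>] cball_subset_cball_of_dist) linarith+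
qed

lemma uncountable_ball_split:
  fixes f :: "'a::{metric_space, second_countable_topology} \<Rightarrow> 'a"
  assumes "continuous_on UNIV f"
    and "pairwise (orbit_separated f \<delta>) S"
    and "uncountable (S \<inter> ball p r)"
  obtains q1 q2 \<rho> where "0 < \<rho>" "2 * \<rho> \<le> r" "cball q1 \<rho> \<subseteq> cball p r" "cball q2 \<rho> \<subseteq> cball p r"
    "uncountable (S \<inter> ball q1 \<rho>)" "uncountable (S \<inter> ball q2 \<rho>)"
    "\<And>y z. y \<in> cball q1 \<rho> \<Longrightarrow> z \<in> cball q2 \<rho> \<Longrightarrow> orbit_separated f \<delta> y z"
proof -
  let ?A = "S \<inter> ball p r"
  obtain q1 q2 where q: "q1 \<in> ?A" "q2 \<in> ?A" "q1 \<noteq> q2"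
    and cond: "q1 \<in> condensation_points ?A" "q2 \<in> condensation_points ?A"
    using two_condensation_points[OF assms(3)] by blast
  then have "orbit_separated f \<delta> q1 q2"
    using assms(2) by (auto dest: pairwiseD)
  then obtain d where "0 < d" and d: "\<And>y z. y \<in> ball q1 d \<Longrightarrow> z \<in> ball q2 d \<Longrightarrow> orbit_separated f \<delta> y z"
    using orbit_separated_nhds[OF assms(1)] by blast
  obtain \<rho> where \<rho>: "0 < \<rho>" "\<rho> < d" "2 * \<rho> \<le> r" "cball q1 \<rho> \<subseteq> cball p r" "cball q2 \<rho> \<subseteq> cball p r"
    using small_cballs_in_cball[of q1 p r q2 d] q \<open>0 < d\<close> by blast
  show thesis
  proof (rule that[OF \<rho>(1,3,4,5)])
    have "?A \<inter> ball q \<rho> \<subseteq> S \<inter> ball q \<rho>" for q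
      by blast
    then show "uncountable (S \<inter> ball q1 \<rho>)" "uncountable (S \<inter> ball q2 \<rho>)"
      using condensation_point_ball[OF cond(1) \<open>0 < \<rho>\<close>] condensation_point_ball[OF cond(2) \<open>0 < \<rho>\<close>]
      by (metis countable_subset)+
    show "orbit_separated f \<delta> y z" if "y \<in> cball q1 \<rho>" "z \<in> cball q2 \<rho>" for y z
      using that \<rho>(2) by (intro d) auto
  qed
qed

definition dyadic_index :: "nat \<Rightarrow> real \<Rightarrow> nat" where
  "dyadic_index n t = nat \<lfloor>2 ^ n * t\<rfloor>"

lemma dyadic_index_Suc_div_2: "dyadic_index (Suc n) t div 2 = dyadic_index n t"
proof -
  have "\<lfloor>2 ^ n * t\<rfloor> = \<lfloor>2 ^ Suc n * t / real_of_int 2\<rfloor>"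
    by simp
  also have "\<dots> = \<lfloor>2 ^ Suc n * t\<rfloor> div 2"
    by (rule floor_divide_real_eq_div) simp
  finally show ?thesis
    unfolding dyadic_index_def by (simp add: nat_div_distrib')
qed

lemma dyadic_index_less: "0 \<le> t \<Longrightarrow> t < 1 \<Longrightarrow> dyadic_index n t < 2 ^ n"
  unfolding dyadic_index_def by (simp add: nat_less_iff floor_less_iff)

lemma ex_dyadic_index_neq:
  assumes "0 \<le> s" "0 \<le> t" "s \<noteq> t"
  shows "\<exists>n. dyadic_index n s \<noteq> dyadic_index n t"
proof -
  obtain n where "(1 / 2) ^ n < \<bar>s - t\<bar>"
    using real_arch_pow_inv[of "\<bar>s - t\<bar>" "1 / 2"] assms(3) by auto
  then have "1 < \<bar>s - t\<bar> * 2 ^ n"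
    by (simp add: field_simps power_one_over)
  also have "\<bar>s - t\<bar> * 2 ^ n = \<bar>2 ^ n * s - 2 ^ n * t\<bar>"
    by (simp add: abs_mult flip: right_diff_distrib)
  finally have "1 < \<bar>2 ^ n * s - 2 ^ n * t\<bar>" .
  then have "\<lfloor>2 ^ n * s\<rfloor> \<noteq> \<lfloor>2 ^ n * t\<rfloor>"
    by linarith
  with assms show ?thesis
    by (auto simp: dyadic_index_def eq_nat_nat_iff)
qed

lemma measurable_dyadic_index [measurable]: "dyadic_index n \<in> borel \<rightarrow>\<^sub>M count_space UNIV"
  unfolding dyadic_index_def by measurable

definition tree_point :: "(nat \<Rightarrow> nat \<Rightarrow> 'a::metric_space) \<Rightarrow> real \<Rightarrow> 'a" where
  "tree_point c t = lim (\<lambda>n. c n (dyadic_index n t))"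

definition separated_levels :: "(nat \<Rightarrow> nat \<Rightarrow> 'a::metric_space) \<Rightarrow> (nat \<Rightarrow> nat \<Rightarrow> real) \<Rightarrow> ('a \<Rightarrow> 'a \<Rightarrow> bool) \<Rightarrow> bool" where
  "separated_levels c r P \<longleftrightarrow> (\<forall>n k k'. k < 2 ^ n \<longrightarrow> k' < 2 ^ n \<longrightarrow> k \<noteq> k' \<longrightarrow>
     (\<forall>y\<in>cball (c n k) (r n k). \<forall>z\<in>cball (c n k') (r n k'). P y z))"

text \<open>Ball \<open>k\<close> of level \<open>n\<close> has centre \<open>c n k\<close> and radius \<open>r n k\<close>; its children are the balls
  \<open>2k\<close> and \<open>2k+1\<close> of level \<open>n+1\<close>, so \<open>t\<close> lies below ball \<open>dyadic_index n t\<close> at every level.\<close>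

locale dyadic_ball_tree =
  fixes c :: "nat \<Rightarrow> nat \<Rightarrow> 'a::complete_space" and r :: "nat \<Rightarrow> nat \<Rightarrow> real" and R :: real
  assumes radius_nonneg: "0 \<le> r n k"
    and radius_le: "r n k \<le> R / 2 ^ n"
    and cball_nested: "cball (c (Suc n) k) (r (Suc n) k) \<subseteq> cball (c n (k div 2)) (r n (k div 2))"
begin

abbreviation node :: "nat \<Rightarrow> real \<Rightarrow> 'a set" where
  "node n t \<equiv> cball (c n (dyadic_index n t)) (r n (dyadic_index n t))"

lemma node_antimono: "m \<le> n \<Longrightarrow> node n t \<subseteq> node m t"
proof (induction rule: dec_induct)
  case (step n)
  then show ?case
    using cball_nested[of n "dyadic_index (Suc n) t"] by (simp add: dyadic_index_Suc_div_2)
qed simp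

lemma center_in_node: "m \<le> n \<Longrightarrow> c n (dyadic_index n t) \<in> node m t"
  using node_antimono[of m n t] centre_in_cball radius_nonneg by blast

lemma Cauchy_centers: "Cauchy (\<lambda>n. c n (dyadic_index n t))"
proof (rule metric_CauchyI)
  fix e :: real assume "0 < e"
  have "(\<lambda>n. R / 2 ^ n) \<longlonglongrightarrow> 0"
    by (rule LIMSEQ_divide_realpow_zero) simp
  then have "\<forall>\<^sub>F n in sequentially. R / 2 ^ n < e / 2"
    using \<open>0 < e\<close> by (intro order_tendstoD(2)) auto
  then obtain M where M: "R / 2 ^ M < e / 2"
    by (metis eventually_sequentially order.refl)
  have "dist (c m (dyadic_index m t)) (c n (dyadic_index n t)) < e" if "M \<le> m" "M \<le> n" for m n
  proof -
    let ?p = "c M (dyadic_index M t)" and ?\<rho> = "r M (dyadic_index M t)"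
    have "dist ?p (c m (dyadic_index m t)) \<le> ?\<rho>" "dist ?p (c n (dyadic_index n t)) \<le> ?\<rho>"
      using center_in_node that by auto
    moreover have "?\<rho> \<le> R / 2 ^ M"
      by (rule radius_le)
    ultimately show ?thesis
      using dist_triangle3[of "c m (dyadic_index m t)" "c n (dyadic_index n t)" ?p] M by linarith
  qed
  then show "\<exists>M. \<forall>m\<ge>M. \<forall>n\<ge>M. dist (c m (dyadic_index m t)) (c n (dyadic_index n t)) < e"
    by blast
qed

lemma LIMSEQ_tree_point: "(\<lambda>n. c n (dyadic_index n t)) \<longlonglongrightarrow> tree_point c t"
  using Cauchy_convergent[OF Cauchy_centers] unfolding tree_point_def by (simp add: convergent_LIMSEQ_iff)

lemma tree_point_in_node: "tree_point c t \<in> node n t"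
proof -
  have "dist (c n (dyadic_index n t)) (tree_point c t) \<le> r n (dyadic_index n t)"
    using LIMSEQ_tree_point
  proof (rule Lim_dist_ubound[OF trivial_limit_sequentially])
    show "\<forall>\<^sub>F m in sequentially. dist (c n (dyadic_index n t)) (c m (dyadic_index m t)) \<le> r n (dyadic_index n t)"
      using center_in_node by (intro eventually_sequentiallyI[of n]) auto
  qed
  then show ?thesis
    by simp
qed

lemma borel_measurable_tree_point: "tree_point c \<in> borel_measurable borel"
proof (rule borel_measurable_LIMSEQ_metric[OF _ LIMSEQ_tree_point])
  show "(\<lambda>t. c n (dyadic_index n t)) \<in> borel_measurable borel" for n
    using measurable_dyadic_index by (rule measurable_compose) simp
qed

lemma separated_levels_tree_point:
  assumes "separated_levels c r P"
    and "s \<in> {0..<1}" "t \<in> {0..<1}" "s \<noteq> t"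
  shows "P (tree_point c s) (tree_point c t)"
proof -
  obtain n where "dyadic_index n s \<noteq> dyadic_index n t"
    using ex_dyadic_index_neq assms(2-4) by auto
  moreover have "dyadic_index n s < 2 ^ n" "dyadic_index n t < 2 ^ n"
    using dyadic_index_less assms(2,3) by auto
  ultimately show ?thesis
    using assms(1) tree_point_in_node unfolding separated_levels_def by blast
qed

lemma countable_tree_point_preimage:
  assumes "separated_levels c r P"
    and "\<And>y z. y \<in> B \<Longrightarrow> z \<in> B \<Longrightarrow> \<not> P y z"
  shows "countable ({0..<1} \<inter> tree_point c -` B)" (is "countable ?E")
proof (cases "?E = {}")
  case False
  then obtain s where "s \<in> ?E"
    by blast
  have "t = s" if "t \<in> ?E" for t
  proof (rule ccontr)
    assume "t \<noteq> s"
    then have "P (tree_point c t) (tree_point c s)"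
      using separated_levels_tree_point[OF assms(1)] that \<open>s \<in> ?E\<close> by blast
    then show False
      using assms(2) that \<open>s \<in> ?E\<close> by blast
  qed
  then have "?E \<subseteq> {s}"
    by blast
  then show ?thesis
    by (rule countable_subset) simp
qed simp

end

primrec ball_tree ::
    "('a \<times> real \<Rightarrow> ('a \<times> real) \<times> ('a \<times> real)) \<Rightarrow> 'a \<times> real \<Rightarrow> nat \<Rightarrow> nat \<Rightarrow> 'a \<times> real" where
  "ball_tree split b 0 k = b"
| "ball_tree split b (Suc n) k = (if even k then fst else snd) (split (ball_tree split b n (k div 2)))"

locale ball_splitting =
  fixes good :: "'a::complete_space \<times> real \<Rightarrow> bool"
    and split :: "'a \<times> real \<Rightarrow> ('a \<times> real) \<times> ('a \<times> real)"
    and P :: "'a \<Rightarrow> 'a \<Rightarrow> bool"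
  assumes good_radius_nonneg: "good b \<Longrightarrow> 0 \<le> snd b"
    and split_good: "good b \<Longrightarrow> split b = (b1, b2) \<Longrightarrow> good b1 \<and> good b2"
    and split_radius: "good b \<Longrightarrow> split b = (b1, b2) \<Longrightarrow> 2 * snd b1 \<le> snd b \<and> 2 * snd b2 \<le> snd b"
    and split_nested: "good b \<Longrightarrow> split b = (b1, b2) \<Longrightarrow>
      cball (fst b1) (snd b1) \<subseteq> cball (fst b) (snd b) \<and> cball (fst b2) (snd b2) \<subseteq> cball (fst b) (snd b)"
    and split_separated: "good b \<Longrightarrow> split b = (b1, b2) \<Longrightarrow>
      y \<in> cball (fst b1) (snd b1) \<Longrightarrow> z \<in> cball (fst b2) (snd b2) \<Longrightarrow> P y z \<and> P z y"
begin

context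
  fixes b :: "'a \<times> real"
  assumes good_root: "good b"
begin

abbreviation "T \<equiv> ball_tree split b"

lemma good_ball_tree: "good (T n k)"
proof (induction n arbitrary: k)
  case (Suc n)
  obtain b1 b2 where "split (T n (k div 2)) = (b1, b2)"
    by (rule prod.exhaust)
  with split_good[OF Suc this] show ?case
    by simp
qed (simp add: good_root)

lemma dyadic_ball_tree: "dyadic_ball_tree (\<lambda>n k. fst (T n k)) (\<lambda>n k. snd (T n k)) (snd b)"
proof
  show "0 \<le> snd (T n k)" for n k
    using good_ball_tree good_radius_nonneg by blast
  show "snd (T n k) \<le> snd b / 2 ^ n" for n k
  proof (induction n arbitrary: k)
    case (Suc n)
    obtain b1 b2 where "split (T n (k div 2)) = (b1, b2)"
      by (rule prod.exhaust)
    with split_radius[OF good_ball_tree this] have "2 * snd (T (Suc n) k) \<le> snd (T n (k div 2))"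
      by simp
    then have "2 ^ n * (2 * snd (T (Suc n) k)) \<le> 2 ^ n * snd (T n (k div 2))"
      by (intro mult_left_mono) auto
    also have "\<dots> \<le> snd b"
      using Suc[of "k div 2"] by (simp add: field_simps del: ball_tree.simps)
    finally show ?case
      by (simp add: field_simps del: ball_tree.simps)
  qed simp
  show "cball (fst (T (Suc n) k)) (snd (T (Suc n) k)) \<subseteq> cball (fst (T n (k div 2))) (snd (T n (k div 2)))"
    for n k
  proof -
    obtain b1 b2 where "split (T n (k div 2)) = (b1, b2)"
      by (rule prod.exhaust)
    with split_nested[OF good_ball_tree this] show ?thesis
      by simp
  qed
qed

lemma ball_tree_separated:
  "k < 2 ^ n \<Longrightarrow> k' < 2 ^ n \<Longrightarrow> k \<noteq> k' \<Longrightarrow>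
    y \<in> cball (fst (T n k)) (snd (T n k)) \<Longrightarrow> z \<in> cball (fst (T n k')) (snd (T n k')) \<Longrightarrow> P y z"
proof (induction n arbitrary: k k')
  case (Suc n)
  show ?case
  proof (cases "k div 2 = k' div 2")
    case True
    then have "even k \<longleftrightarrow> odd k'"
      using \<open>k \<noteq> k'\<close> by (metis div_mult_mod_eq even_iff_mod_2_eq_zero odd_iff_mod_2_eq_one)
    obtain b1 b2 where split_node: "split (T n (k div 2)) = (b1, b2)"
      by (rule prod.exhaust)
    then have "T (Suc n) k = (if even k then b1 else b2)" "T (Suc n) k' = (if even k' then b1 else b2)"
      using True by simp_all
    then show ?thesis
      using split_separated[OF good_ball_tree split_node] Suc.prems(4,5) \<open>even k \<longleftrightarrow> odd k'\<close>
      by (cases "even k") auto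
  next
    case False
    moreover have "k div 2 < 2 ^ n" "k' div 2 < 2 ^ n"
      using Suc.prems(1,2) by auto
    moreover have "y \<in> cball (fst (T n (k div 2))) (snd (T n (k div 2)))"
      "z \<in> cball (fst (T n (k' div 2))) (snd (T n (k' div 2)))"
      using dyadic_ball_tree.cball_nested[OF dyadic_ball_tree] Suc.prems(4,5) by blast+
    ultimately show ?thesis
      using Suc.IH by blast
  qed
qed simp

lemma separated_levels_ball_tree: "separated_levels (\<lambda>n k. fst (T n k)) (\<lambda>n k. snd (T n k)) P"
  unfolding separated_levels_def using ball_tree_separated by blast

end

end

lemma orbit_separated_ball_tree_exists:
  fixes f :: "'a::polish_space \<Rightarrow> 'a"
  assumes "continuous_on UNIV f"
    and "pairwise (orbit_separated f \<delta>) S"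
    and "uncountable S"
  obtains c r R where "dyadic_ball_tree c r R" "separated_levels c r (orbit_separated f \<delta>)"
proof -
  define good where "good b \<longleftrightarrow> uncountable (S \<inter> ball (fst b) (snd b))" for b :: "'a \<times> real"
  define split_ok where "split_ok b b1 b2 \<longleftrightarrow> good b1 \<and> good b2 \<and> 2 * snd b1 \<le> snd b \<and> 2 * snd b2 \<le> snd b \<and>
      cball (fst b1) (snd b1) \<subseteq> cball (fst b) (snd b) \<and> cball (fst b2) (snd b2) \<subseteq> cball (fst b) (snd b) \<and>
      (\<forall>y\<in>cball (fst b1) (snd b1). \<forall>z\<in>cball (fst b2) (snd b2). orbit_separated f \<delta> y z)" for b b1 b2
  have "\<exists>bs. split_ok b (fst bs) (snd bs)" if "good b" for b
  proof -
    obtain q1 q2 \<rho> where "0 < \<rho>" "2 * \<rho> \<le> snd b"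
      "cball q1 \<rho> \<subseteq> cball (fst b) (snd b)" "cball q2 \<rho> \<subseteq> cball (fst b) (snd b)"
      "uncountable (S \<inter> ball q1 \<rho>)" "uncountable (S \<inter> ball q2 \<rho>)"
      "\<And>y z. y \<in> cball q1 \<rho> \<Longrightarrow> z \<in> cball q2 \<rho> \<Longrightarrow> orbit_separated f \<delta> y z"
      using \<open>good b\<close> unfolding good_def by (rule uncountable_ball_split[OF assms(1,2)]) blast
    then have "split_ok b (q1, \<rho>) (q2, \<rho>)"
      by (simp add: split_ok_def good_def)
    then show ?thesis
      by (intro exI[of _ "((q1, \<rho>), (q2, \<rho>))"]) simp
  qed
  then have "\<exists>split. \<forall>b. good b \<longrightarrow> split_ok b (fst (split b)) (snd (split b))"
    by (intro choice) blast
  then obtain split where split: "\<And>b. good b \<Longrightarrow> split_ok b (fst (split b)) (snd (split b))"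
    by blast
  interpret ball_splitting good split "orbit_separated f \<delta>"
  proof
    show "0 \<le> snd b" if "good b" for b
      using that uncountable_Int_ball_imp_pos by (fastforce simp: good_def)
  qed (use split in \<open>force simp: split_ok_def orbit_separated_commute\<close>)+
  have "S \<inter> condensation_points S \<noteq> {}"
    using uncountable_condensation_points[OF assms(3)] by auto
  then obtain x where "x \<in> S \<inter> condensation_points S"
    by blast
  then have root: "good (x, 1)"
    using condensation_point_ball[of x S 1] by (simp add: good_def)
  show thesis
    by (rule that[OF dyadic_ball_tree[OF root] separated_levels_ball_tree[OF root]])
qed

lemma measurable_uniform_measure_unit_interval:
  "g \<in> borel_measurable borel \<Longrightarrow> g \<in> uniform_measure lborel {0..<1::real} \<rightarrow>\<^sub>M borel"
  by (subst measurable_cong_sets[OF sets_uniform_measure refl]) simp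

lemma prob_space_distr_uniform_unit_interval:
  "g \<in> borel_measurable borel \<Longrightarrow> prob_space (distr (uniform_measure lborel {0..<1::real}) borel g)"
  by (intro prob_space.prob_space_distr prob_space_uniform_measure measurable_uniform_measure_unit_interval)
    simp_all

lemma emeasure_distr_uniform_unit_interval_eq_0:
  fixes g :: "real \<Rightarrow> 'a::topological_space"
  assumes g: "g \<in> borel_measurable borel" and "A \<in> sets borel"
    and "countable ({0..<1} \<inter> g -` A)"
  shows "emeasure (distr (uniform_measure lborel {0..<1}) borel g) A = 0"
proof -
  have "g -` A \<in> sets borel"
    using measurable_sets[OF assms(1,2)] by simp
  have "emeasure (distr (uniform_measure lborel {0..<1}) borel g) A
      = emeasure (uniform_measure lborel {0..<1}) (g -` A)"
    using emeasure_distr[OF measurable_uniform_measure_unit_interval[OF g] assms(2)] by simp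
  also have "\<dots> = emeasure lborel ({0..<1} \<inter> g -` A) / emeasure lborel {0..<1::real}"
    using \<open>g -` A \<in> sets borel\<close> by (intro emeasure_uniform_measure) auto
  also have "\<dots> = 0"
    using emeasure_lborel_countable[OF assms(3)] by simp
  finally show ?thesis .
qed

theorem theorem4p7:
  fixes f :: "'a::polish_space \<Rightarrow> 'a" and \<delta> :: real
  assumes "continuous_on UNIV f"
    and "\<delta> > 0"
    and "scrambled_set f \<delta> S" and "uncountable S"
  shows "\<exists>M \<epsilon>. expansive_measure f M \<epsilon>"
proof -
  obtain c r R where tree: "dyadic_ball_tree c r R" and separated: "separated_levels c r (orbit_separated f \<delta>)"
    using orbit_separated_ball_tree_exists[OF assms(1) scrambled_set_pairwise_orbit_separated[OF assms(3)] assms(4)] .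
  interpret dyadic_ball_tree c r R
    by (rule tree)
  let ?\<mu> = "distr (uniform_measure lborel {0..<1}) borel (tree_point c)"
  have "emeasure ?\<mu> (dyn_ball f (\<delta> / 2) x) = 0" for x
  proof (rule emeasure_distr_uniform_unit_interval_eq_0[OF borel_measurable_tree_point])
    show "dyn_ball f (\<delta> / 2) x \<in> sets borel"
      using closed_dyn_ball[OF assms(1)] by simp
    show "countable ({0..<1} \<inter> tree_point c -` dyn_ball f (\<delta> / 2) x)"
    proof (rule countable_tree_point_preimage[OF separated])
      show "\<not> orbit_separated f \<delta> y z" if "y \<in> dyn_ball f (\<delta> / 2) x" "z \<in> dyn_ball f (\<delta> / 2) x" for y z
        using not_orbit_separated_dyn_ball[OF that] by simp
    qed
  qed
  then have "expansive_measure f ?\<mu> (\<delta> / 2)"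
    unfolding expansive_measure_def
    using prob_space_distr_uniform_unit_interval[OF borel_measurable_tree_point] assms(2) by simp
  then show ?thesis
    by blast
qed

end
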